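(* Let $n,N\ge1$, $1\le b\le n$, and let $J\subseteq\mathbb{Z}_n$ with $|J|=g>0$. Let $\mathbf{c}=(b_{1,1},\dots,b_{n,1},b_{1,2},\dots,b_{n,2},\dots,b_{1,N},\dots,b_{n,N})\in\mathbb{F}_q^{nN}$ and let $\Delta(\mathbf{c})=(b_{i,j})$ be the associated $n\times N$ matrix. Suppose that for each $i\in J$ the $i$-th row of $\Delta(\mathbf{c})$ has exactly $\ell$ nonzero entries, and all other rows of $\Delta(\mathbf{c})$ are zero. Then $$w_b(\mathbf{c})\ge \ell\Big(g+\sum_{H\in\mathbb{H}(J),\,|H|\le b-1}|H|+\sum_{H\in\mathbb{H}(J),\,|H|\ge b}(b-1)\Big),$$ where $w_b(\mathbf{c})$ is the $b$-symbol weight of $\mathbf{c}$ as a vector of length $nN$.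
   Context: For a vector of length $L$, indices are in $\mathbb{Z}_L=\{1,\dots,L\}$ taken cyclically mod $L$. For $\mathbf{x}\in\mathbb{F}_q^L$, $\chi_b(\mathbf{x})=\{i\in\mathbb{Z}_L:(x_i,\dots,x_{i+b-1})\ne\mathbf{0}\}$ (indices mod $L$) and $w_b(\mathbf{x})=|\chi_b(\mathbf{x})|$. For $J\subseteq\mathbb{Z}_n$, a hole of $J$ of size $h\ge 1$ is a set $H=\{a+1,\dots,a+h\}\subseteq\mathbb{Z}_n\setminus J$ (indices mod $n$) with $a,a+h+1\in J$; $\mathbb{H}(J)$ is the set of all holes of $J$. The vector $\mathbf{c}\in\mathbb{F}_q^{nN}$ is identified with the $n\times N$ matrix $\Delta(\mathbf{c})$ whose $(i,j)$ entry $b_{i,j}$ is the coordinate of $\mathbf{c}$ in position $i+(j-1)n$. *)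

theory Defs
  imports Main
begin

definition cyc :: "nat \<Rightarrow> nat \<Rightarrow> nat" where
  "cyc L i = ((i + L - 1) mod L) + 1"

text \<open>Vectors of length L are functions nat => 'a, with coordinates at positions 1..L.
  chi_b(x) = set of i in Z_L with (x_i,...,x_{i+b-1}) nonzero (indices mod L).\<close>
definition chi_b :: "nat \<Rightarrow> nat \<Rightarrow> (nat \<Rightarrow> 'a::zero) \<Rightarrow> nat set" where
  "chi_b L b x = {i \<in> {1..L}. \<exists>k<b. x (cyc L (i + k)) \<noteq> 0}"

definition w_b :: "nat \<Rightarrow> nat \<Rightarrow> (nat \<Rightarrow> 'a::zero) \<Rightarrow> nat" where
  "w_b L b x = card (chi_b L b x)"

definition holes :: "nat \<Rightarrow> nat set \<Rightarrow> nat set set" where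
  "holes n J = {H. \<exists>a h. h \<ge> 1 \<and> a \<in> J \<and> cyc n (a + h + 1) \<in> J \<and>
                      H = cyc n ` {a + 1 .. a + h} \<and> H \<inter> J = {}}"

definition Delta :: "nat \<Rightarrow> (nat \<Rightarrow> 'a) \<Rightarrow> nat \<Rightarrow> nat \<Rightarrow> 'a" where
  "Delta n c i j = c (i + (j - 1) * n)"

end

theory Submission
  imports Defs "HOL-Number_Theory.Cong"
begin

text \<open>Let c have a nonzero coordinate p in row e \<in> J, and let s be the number of rows cyclically
  preceding e that lie outside J (the size of the hole just before e, or 0). Then p lies in the
  b-windows starting at p, p - 1, ..., p - r with r = min(s, b - 1), and these window starts are
  distinct for distinct such p: a coincidence p - t = p' - t' with t < t' would make the row of p,
  which is in J, one of the rows outside J just before the row of p'. Hence w_b(c) is at least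
  l times the sum of 1 + min(s, b - 1) over the rows e \<in> J, and since every hole of J is the run of
  rows preceding the element of J right after it, this dominates the sum over the holes.\<close>

lemma cyc_in_range: "0 < L \<Longrightarrow> cyc L i \<in> {1..L}"
  unfolding cyc_def by (simp add: Suc_leI)

lemma cyc_eq_self: "i \<in> {1..L} \<Longrightarrow> cyc L i = i"
  unfolding cyc_def by (cases i) auto

lemma cyc_eq_iff_cong:
  assumes "0 < L"
  shows "cyc L x = cyc L y \<longleftrightarrow> [x = y] (mod L)"
proof -
  have "cyc L x = cyc L y \<longleftrightarrow> [x + L - 1 = y + L - 1] (mod L)"
    unfolding cyc_def cong_def by simp
  also have "\<dots> \<longleftrightarrow> [x + L - 1 + 1 = y + L - 1 + 1] (mod L)"
    by (rule cong_add_rcancel_nat[symmetric])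
  also have "\<dots> \<longleftrightarrow> [x = y] (mod L)"
    using assms by (simp add: cong_add_rcancel_nat)
  finally show ?thesis .
qed

lemma cong_cyc: "0 < L \<Longrightarrow> [cyc L x = x] (mod L)"
  using cyc_eq_iff_cong cyc_eq_self cyc_in_range by metis

lemma cong_imp_eq_in_range:
  fixes x y L :: nat
  assumes "x \<in> {1..L}" "y \<in> {1..L}" "[x = y] (mod L)"
  shows "x = y"
proof -
  have "0 < L" using assms(1) by auto
  then show ?thesis using assms cyc_eq_iff_cong cyc_eq_self by metis
qed

definition gap :: "nat \<Rightarrow> nat set \<Rightarrow> nat \<Rightarrow> nat" where
  "gap n J e = (LEAST t. \<exists>e'\<in>J. [e' + Suc t = e] (mod n))"

definition hole_before :: "nat \<Rightarrow> nat set \<Rightarrow> nat \<Rightarrow> nat set" where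
  "hole_before n J e = {x \<in> {1..n}. \<exists>u\<in>{1..gap n J e}. [x + u = e] (mod n)}"

lemma not_cong_within_gap:
  assumes "e' \<in> J" "0 < u" "u \<le> gap n J e"
  shows "\<not> [e' + u = e] (mod n)"
proof
  assume "[e' + u = e] (mod n)"
  then have "[e' + Suc (u - 1) = e] (mod n)" using assms(2) by simp
  moreover have "u - 1 < gap n J e" using assms(2,3) by linarith
  ultimately show False
    unfolding gap_def using assms(1) not_less_Least by blast
qed

lemma gap_after_hole:
  assumes "0 < n" "J \<subseteq> {1..n}" "a \<in> J" "cyc n ` {a + 1 .. a + h} \<inter> J = {}"
    and "[e = a + h + 1] (mod n)"
  shows "gap n J e = h"
  unfolding gap_def
proof (rule Least_equality)
  show "\<exists>e'\<in>J. [e' + Suc h = e] (mod n)"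
    using assms(3,5) by (auto intro: cong_sym)
next
  fix y assume "\<exists>e'\<in>J. [e' + Suc y = e] (mod n)"
  then obtain e' where e': "e' \<in> J" "[e' + Suc y = e] (mod n)" by blast
  show "h \<le> y"
  proof (rule ccontr)
    assume "\<not> h \<le> y"
    then have "a + h + 1 = a + (h - y) + Suc y" by simp
    then have "[e' + Suc y = a + (h - y) + Suc y] (mod n)"
      using e'(2) assms(5) cong_trans by metis
    then have "[e' = a + (h - y)] (mod n)" using cong_add_rcancel_nat by blast
    then have "e' = cyc n (a + (h - y))"
      using cyc_eq_iff_cong[OF assms(1)] cyc_eq_self e'(1) assms(2) by (metis subsetD)
    moreover have "cyc n (a + (h - y)) \<in> cyc n ` {a + 1 .. a + h}"
      using \<open>\<not> h \<le> y\<close> by auto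
    ultimately show False using e'(1) assms(4) by blast
  qed
qed

lemma hole_before_eq:
  assumes "0 < n" "gap n J e = h" "[e = a + h + 1] (mod n)"
  shows "hole_before n J e = cyc n ` {a + 1 .. a + h}"
proof (intro equalityI subsetI)
  fix x assume "x \<in> hole_before n J e"
  then obtain u where x: "x \<in> {1..n}" and u: "u \<in> {1..h}" "[x + u = e] (mod n)"
    unfolding hole_before_def assms(2) by blast
  then have "[x + u = a + (h + 1 - u) + u] (mod n)"
    using assms(3) cong_trans by fastforce
  then have "[x = a + (h + 1 - u)] (mod n)" using cong_add_rcancel_nat by blast
  then have "x = cyc n (a + (h + 1 - u))"
    using cyc_eq_iff_cong[OF assms(1)] cyc_eq_self[OF x] by metis
  moreover have "a + (h + 1 - u) \<in> {a + 1 .. a + h}" using u(1) by auto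
  ultimately show "x \<in> cyc n ` {a + 1 .. a + h}" by blast
next
  fix x assume "x \<in> cyc n ` {a + 1 .. a + h}"
  then obtain k where k: "k \<in> {a + 1 .. a + h}" and x: "x = cyc n k" by blast
  have "[x + (a + h + 1 - k) = k + (a + h + 1 - k)] (mod n)"
    unfolding x by (rule cong_add[OF cong_cyc[OF assms(1)] cong_refl])
  also have "k + (a + h + 1 - k) = a + h + 1" using k by simp
  also have "[\<dots> = e] (mod n)" using assms(3) by (rule cong_sym)
  finally have "[x + (a + h + 1 - k) = e] (mod n)" .
  moreover have "a + h + 1 - k \<in> {1..h}" using k by auto
  moreover have "x \<in> {1..n}" unfolding x by (rule cyc_in_range[OF assms(1)])
  ultimately show "x \<in> hole_before n J e"
    unfolding hole_before_def assms(2) by blast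
qed

lemma hole_eq_hole_before:
  assumes "0 < n" "J \<subseteq> {1..n}" "H \<in> holes n J"
  obtains e where "e \<in> J" "H = hole_before n J e" "card H \<le> gap n J e"
proof -
  obtain a h where a: "a \<in> J" and e: "cyc n (a + h + 1) \<in> J"
    and H: "H = cyc n ` {a + 1 .. a + h}" and HJ: "H \<inter> J = {}"
    using assms(3) unfolding holes_def by blast
  have cong_e: "[cyc n (a + h + 1) = a + h + 1] (mod n)" by (rule cong_cyc[OF assms(1)])
  have gap_e: "gap n J (cyc n (a + h + 1)) = h"
    using gap_after_hole[OF assms(1,2) a _ cong_e] H HJ by simp
  have "card H \<le> h" using H card_image_le[of "{a + 1 .. a + h}" "cyc n"] by simp
  then show ?thesis
    using that e hole_before_eq[OF assms(1) gap_e cong_e] H gap_e by simp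
qed

lemma finite_holes: "0 < n \<Longrightarrow> finite (holes n J)"
  by (rule finite_subset[of _ "Pow {1..n}"]) (use cyc_in_range in \<open>auto simp: holes_def\<close>)

lemma sum_holes_le_sum_gap:
  assumes "0 < n" "J \<subseteq> {1..n}"
  shows "(\<Sum>H\<in>holes n J. min (card H) k) \<le> (\<Sum>e\<in>J. min (gap n J e) k)"
proof (rule sum_le_included[where i = "hole_before n J"])
  show "finite (holes n J)" using assms(1) by (rule finite_holes)
  show "finite J" using assms(2) finite_subset by blast
  show "\<forall>H\<in>holes n J. \<exists>e\<in>J. hole_before n J e = H \<and> min (card H) k \<le> min (gap n J e) k"
    using hole_eq_hole_before[OF assms] by (metis min.mono order_refl)
qed simp

text \<open>The window starting at cyc L (p + L - t) contains p at offset t; adding L keeps the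
  natural-number subtraction from truncating.\<close>

lemma w_b_ge_window_count:
  assumes "0 < L" "b \<le> L" "P \<subseteq> {1..L}" "\<And>p. p \<in> P \<Longrightarrow> c p \<noteq> 0 \<and> r p < b"
    and "inj_on (\<lambda>(p, t). cyc L (p + L - t)) (SIGMA p:P. {..r p})"
  shows "(\<Sum>p\<in>P. Suc (r p)) \<le> w_b L b c"
proof -
  have "(\<lambda>(p, t). cyc L (p + L - t)) ` (SIGMA p:P. {..r p}) \<subseteq> chi_b L b c"
  proof clarify
    fix p t assume p: "p \<in> P" and t: "t \<le> r p"
    have "t < b" "t \<le> L" using assms(2) assms(4)[OF p] t by linarith+
    have "[cyc L (p + L - t) + t = p + L - t + t] (mod L)"
      by (rule cong_add[OF cong_cyc[OF assms(1)] cong_refl])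
    also have "p + L - t + t = p + L" using \<open>t \<le> L\<close> by simp
    also have "[p + L = p] (mod L)" by (simp add: cong_def)
    finally have "cyc L (cyc L (p + L - t) + t) = cyc L p"
      using cyc_eq_iff_cong[OF assms(1)] by blast
    also have "cyc L p = p" using assms(3) p by (intro cyc_eq_self) auto
    finally have "c (cyc L (cyc L (p + L - t) + t)) \<noteq> 0" using assms(4)[OF p] by simp
    then show "cyc L (p + L - t) \<in> chi_b L b c"
      unfolding chi_b_def using cyc_in_range[OF assms(1)] \<open>t < b\<close> by blast
  qed
  moreover have "finite (chi_b L b c)" unfolding chi_b_def by simp
  ultimately have "card (SIGMA p:P. {..r p}) \<le> w_b L b c"
    unfolding w_b_def using card_inj_on_le assms(5) by blast
  moreover have "finite P" using assms(3) finite_subset by blast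
  ultimately show ?thesis by simp
qed

lemma inj_on_window_starts:
  assumes "0 < L" "n dvd L" "P \<subseteq> {1..L}"
    and "\<And>p. p \<in> P \<Longrightarrow> cyc n p \<in> J \<and> r p \<le> gap n J (cyc n p) \<and> r p \<le> L"
  shows "inj_on (\<lambda>(p, t). cyc L (p + L - t)) (SIGMA p:P. {..r p})"
proof -
  have "0 < n" using assms(1,2) by (auto intro: gr0I)
  have shift_le: "t' \<le> t"
    if "[p + t' = p' + t] (mod L)" "p \<in> P" "p' \<in> P" "t' \<le> r p'" for p t p' t'
  proof (rule ccontr)
    assume "\<not> t' \<le> t"
    then have "[p + (t' - t) + t = p' + t] (mod L)" using that(1) by simp
    then have "[p + (t' - t) = p'] (mod n)"
      using cong_add_rcancel_nat cong_dvd_modulus_nat assms(2) by blast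
    then have "[cyc n p + (t' - t) = cyc n p'] (mod n)"
      using cong_add[OF cong_cyc[OF \<open>0 < n\<close>] cong_refl] cong_cyc[OF \<open>0 < n\<close>]
      by (metis cong_sym cong_trans)
    moreover have "t' - t \<le> gap n J (cyc n p')" using assms(4)[OF that(3)] that(4) by linarith
    moreover have "cyc n p \<in> J" using assms(4)[OF that(2)] by blast
    moreover have "0 < t' - t" using \<open>\<not> t' \<le> t\<close> by simp
    ultimately show False using not_cong_within_gap by blast
  qed
  show ?thesis
  proof (rule inj_onI, clarify)
    fix p t p' t'
    assume p: "p \<in> P" "t \<le> r p" and p': "p' \<in> P" "t' \<le> r p'"
      and eq: "cyc L (p + L - t) = cyc L (p' + L - t')"
    have "t \<le> L" "t' \<le> L" using assms(4) p p' by (meson order_trans)+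
    have "[p + L - t + (t + t') = p' + L - t' + (t + t')] (mod L)"
      using eq cyc_eq_iff_cong[OF assms(1)] cong_add cong_refl by blast
    also have "p + L - t + (t + t') = p + t' + L" using \<open>t \<le> L\<close> by simp
    also have "p' + L - t' + (t + t') = p' + t + L" using \<open>t' \<le> L\<close> by simp
    finally have shift: "[p + t' = p' + t] (mod L)" using cong_add_rcancel_nat by blast
    have "t = t'" using shift_le[OF shift p(1) p'] shift_le[OF cong_sym[OF shift] p'(1) p] by simp
    then have "[p = p'] (mod L)" using shift cong_add_rcancel_nat by blast
    moreover have "p \<in> {1..L}" "p' \<in> {1..L}" using assms(3) p(1) p'(1) by auto
    ultimately show "p = p' \<and> t = t'" using cong_imp_eq_in_range \<open>t = t'\<close> by simp
  qed
qed

lemma matrix_position: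
  assumes "i \<in> {1..n}" "j \<in> {1..N}"
  shows "i + (j - 1) * n \<in> {1..n * N}" "cyc n (i + (j - 1) * n) = i"
proof -
  have "(j - 1) * n + n = j * n" using assms(2) by (cases j) auto
  also have "\<dots> \<le> n * N" using assms(2) by simp
  finally have "(j - 1) * n + n \<le> n * N" .
  then show "i + (j - 1) * n \<in> {1..n * N}" using assms(1) by auto
  have "0 < n" using assms(1) by simp
  have "[i + (j - 1) * n = i] (mod n)" by (simp add: cong_def)
  then have "cyc n (i + (j - 1) * n) = cyc n i" by (simp add: cyc_eq_iff_cong[OF \<open>0 < n\<close>])
  then show "cyc n (i + (j - 1) * n) = i" using cyc_eq_self[OF assms(1)] by simp
qed

lemma inj_on_matrix_position:
  fixes n N :: nat
  shows "inj_on (\<lambda>(i, j). i + (j - 1) * n) ({1..n} \<times> {1..N})"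
proof (rule inj_onI, clarify)
  fix i j i' j' assume ij: "i \<in> {1..n}" "j \<in> {1..N}" "i' \<in> {1..n}" "j' \<in> {1..N}"
    and eq: "i + (j - 1) * n = i' + (j' - 1) * n"
  have "i = cyc n (i + (j - 1) * n)" using matrix_position(2)[OF ij(1,2)] by simp
  also have "\<dots> = i'" using matrix_position(2)[OF ij(3,4)] eq by simp
  finally have "i = i'" .
  with eq ij show "i = i' \<and> j = j'" by auto
qed

lemma w_b_ge_gap_sum:
  fixes c :: "nat \<Rightarrow> 'a::zero"
  assumes "0 < b" "b \<le> n" "0 < N" "J \<subseteq> {1..n}"
    and "\<And>i. i \<in> J \<Longrightarrow> card {j \<in> {1..N}. Delta n c i j \<noteq> 0} = l"
  shows "l * (\<Sum>e\<in>J. Suc (min (gap n J e) (b - 1))) \<le> w_b (n * N) b c"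
proof -
  define R where "R i = {j \<in> {1..N}. Delta n c i j \<noteq> 0}" for i
  define T where "T = (SIGMA i:J. R i)"
  define pos where "pos = (\<lambda>(i, j). i + (j - 1) * n)"
  define P where "P = pos ` T"
  define r where "r p = min (gap n J (cyc n p)) (b - 1)" for p
  have "0 < n" using assms(1,2) by simp
  have "n \<le> n * N" using assms(3) by simp
  with assms(2) have "b \<le> n * N" by (rule le_trans)
  have T: "T \<subseteq> {1..n} \<times> {1..N}" using assms(4) by (auto simp: T_def R_def)
  then have pos_inj: "inj_on pos T"
    unfolding pos_def using inj_on_matrix_position inj_on_subset by blast
  have pos_row: "cyc n (pos (i, j)) = i" "pos (i, j) \<in> {1..n * N}" if "(i, j) \<in> T" for i j
    using matrix_position[of i n j N] T that unfolding pos_def by auto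
  have P: "P \<subseteq> {1..n * N}" using pos_row unfolding P_def by auto
  have row_P: "cyc n p \<in> J" if "p \<in> P" for p
    using that pos_row unfolding P_def T_def by auto
  have "l * (\<Sum>i\<in>J. Suc (min (gap n J i) (b - 1)))
      = (\<Sum>i\<in>J. card (R i) * Suc (min (gap n J i) (b - 1)))"
    using assms(5) by (simp add: R_def sum_distrib_left)
  also have "\<dots> = (\<Sum>i\<in>J. \<Sum>j\<in>R i. Suc (min (gap n J i) (b - 1)))"
    by simp
  also have "\<dots> = (\<Sum>(i, j)\<in>T. Suc (min (gap n J i) (b - 1)))"
    unfolding T_def by (rule sum.Sigma) (use assms(4) finite_subset in \<open>auto simp: R_def\<close>)
  also have "\<dots> = (\<Sum>(i, j)\<in>T. Suc (r (pos (i, j))))"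
    using pos_row by (intro sum.cong refl) (clarsimp simp: r_def)
  also have "\<dots> = (\<Sum>p\<in>P. Suc (r p))"
    unfolding P_def by (simp add: sum.reindex[OF pos_inj] split_def)
  also have "\<dots> \<le> w_b (n * N) b c"
  proof (rule w_b_ge_window_count[OF _ \<open>b \<le> n * N\<close> P])
    show "0 < n * N" using \<open>0 < n\<close> assms(3) by simp
    show "c p \<noteq> 0 \<and> r p < b" if "p \<in> P" for p
      using that assms(1) by (auto simp: P_def T_def r_def pos_def R_def Delta_def)
    show "inj_on (\<lambda>(p, t). cyc (n * N) (p + n * N - t)) (SIGMA p:P. {..r p})"
    proof (rule inj_on_window_starts[OF \<open>0 < n * N\<close> _ P])
      show "cyc n p \<in> J \<and> r p \<le> gap n J (cyc n p) \<and> r p \<le> n * N" if "p \<in> P" for p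
        using row_P[OF that] \<open>b \<le> n * N\<close>
        unfolding r_def by auto
    qed simp
  qed
  finally show ?thesis .
qed

lemma sum_min_split:
  fixes f :: "'b \<Rightarrow> nat"
  assumes "finite A"
  shows "(\<Sum>x\<in>{x\<in>A. f x \<le> k}. f x) + (\<Sum>x\<in>{x\<in>A. k < f x}. k) = (\<Sum>x\<in>A. min (f x) k)"
proof -
  have "(\<Sum>x\<in>A. min (f x) k) = (\<Sum>x\<in>A. if f x \<le> k then f x else k)"
    by (simp add: min_def)
  also have "\<dots> = (\<Sum>x\<in>A \<inter> {x. f x \<le> k}. f x) + (\<Sum>x\<in>A \<inter> - {x. f x \<le> k}. k)"
    using assms by (rule sum.If_cases)
  also have "A \<inter> {x. f x \<le> k} = {x\<in>A. f x \<le> k}" by blast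
  also have "A \<inter> - {x. f x \<le> k} = {x\<in>A. k < f x}" by auto
  finally show ?thesis by simp
qed

theorem mainTheorem2:
  fixes c :: "nat \<Rightarrow> 'a::{field,finite}"
    and n N b g l :: nat and J :: "nat set"
  assumes "n \<ge> 1" and "N \<ge> 1" and "1 \<le> b" and "b \<le> n"
    and "J \<subseteq> {1..n}" and "card J = g" and "g > 0"
    and "\<And>i. i \<in> J \<Longrightarrow> card {j \<in> {1..N}. Delta n c i j \<noteq> 0} = l"
    and "\<And>i j. i \<in> {1..n} - J \<Longrightarrow> j \<in> {1..N} \<Longrightarrow> Delta n c i j = 0"
  shows "w_b (n * N) b c \<ge>
           l * (g + (\<Sum>H \<in> {H \<in> holes n J. card H \<le> b - 1}. card H)
                + (\<Sum>H \<in> {H \<in> holes n J. card H \<ge> b}. b - 1))"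
proof -
  have "0 < n" "0 < N" "0 < b" using assms(1-3) by simp_all
  have "{H \<in> holes n J. card H \<ge> b} = {H \<in> holes n J. b - 1 < card H}"
    using \<open>0 < b\<close> by auto
  then have "(\<Sum>H \<in> {H \<in> holes n J. card H \<le> b - 1}. card H)
        + (\<Sum>H \<in> {H \<in> holes n J. card H \<ge> b}. b - 1)
      = (\<Sum>H\<in>holes n J. min (card H) (b - 1))"
    using sum_min_split[OF finite_holes[OF \<open>0 < n\<close>]] by simp
  also have "\<dots> \<le> (\<Sum>e\<in>J. min (gap n J e) (b - 1))"
    by (rule sum_holes_le_sum_gap[OF \<open>0 < n\<close> assms(5)])
  finally have "(\<Sum>H \<in> {H \<in> holes n J. card H \<le> b - 1}. card H)
        + (\<Sum>H \<in> {H \<in> holes n J. card H \<ge> b}. b - 1)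
      \<le> (\<Sum>e\<in>J. min (gap n J e) (b - 1))" .
  moreover have "(\<Sum>e\<in>J. Suc (min (gap n J e) (b - 1))) = g + (\<Sum>e\<in>J. min (gap n J e) (b - 1))"
    using assms(6) by (simp add: sum_Suc)
  ultimately have "g + (\<Sum>H \<in> {H \<in> holes n J. card H \<le> b - 1}. card H)
        + (\<Sum>H \<in> {H \<in> holes n J. card H \<ge> b}. b - 1)
      \<le> (\<Sum>e\<in>J. Suc (min (gap n J e) (b - 1)))"
    by linarith
  then have "l * (g + (\<Sum>H \<in> {H \<in> holes n J. card H \<le> b - 1}. card H)
        + (\<Sum>H \<in> {H \<in> holes n J. card H \<ge> b}. b - 1))
      \<le> l * (\<Sum>e\<in>J. Suc (min (gap n J e) (b - 1)))"
    by (rule mult_le_mono2)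
  also have "\<dots> \<le> w_b (n * N) b c"
    by (rule w_b_ge_gap_sum[OF \<open>0 < b\<close> assms(4) \<open>0 < N\<close> assms(5,8)])
  finally show ?thesis .
qed

end
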